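(* Let $K>2$, let $n_1=1$, let $n_2>1$ be an integer, and let $n_3,\dots,n_K$ be positive integers. Let $\tau$ be the time of the first emptying event and $p$ the type emptied at time $\tau$. Then for every $t$ with $\Pr[\tau=t]>0$, \[ \Pr[p=1\mid \tau=t]\ \ge\ \Pr[p=2\mid \tau=t]. \]
   Context: Initial stocks $\vec n^{(0)}=(n_1,\dots,n_K)$ of $K$ goodie types evolve as follows: at each step $t=1,2,\dots$, as long as at least two coordinates of $\vec n^{(t-1)}$ are nonzero, an index $i$ is chosen uniformly at random (independently of the past) among the indices with $n_i^{(t-1)}>0$, and $\vec n^{(t)}=\vec n^{(t-1)}-\vec e_i$ ($\vec e_i$ the $i$-th standard unit vector). The time of the first emptying event is $\tau=\min\{t : \exists i \text{ with } n_i^{(t)}=0 \text{ and } n_i^{(0)}>0\}$; exactly one type is emptied at that step, and $p$ denotes that type. *)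

theory Defs
  imports "HOL-Analysis.Analysis"
begin

text \<open>Goodie types are indexed by 1..K; a stock vector is a function v :: nat => nat
  (values outside 1..K are irrelevant).  first_empty K v t i is the probability that,
  for the process started from stock vector v (one step = remove one item of a type chosen
  uniformly among the types with positive stock, performed as long as at least two types
  have positive stock), the first emptying event happens at step t and empties type i.
  Before the first emptying event the set of positive types does not change, so the
  recursion below (one-step analysis) restarts from the post-step state with the same
  set of initially positive types.\<close>

fun first_empty :: "nat \<Rightarrow> (nat \<Rightarrow> nat) \<Rightarrow> nat \<Rightarrow> nat \<Rightarrow> real" where
  "first_empty K v 0 i = 0"
| "first_empty K v (Suc t) i =
     (let A = {j \<in> {1..K}. 0 < v j} in
      if card A < 2 then 0
      else (\<Sum>j\<in>A. (if v j = 1 then (if t = 0 \<and> j = i then 1 else 0)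
                      else first_empty K (v(j := v j - 1)) t i)) / real (card A))"

definition tau_prob :: "nat \<Rightarrow> (nat \<Rightarrow> nat) \<Rightarrow> nat \<Rightarrow> real" where
  "tau_prob K v t = (\<Sum>i\<in>{1..K}. first_empty K v t i)"

end

theory Submission
  imports Defs
begin

text \<open>A type with a single item left is emptied as soon as it is drawn, so it is emptied at
  step 1 with the largest possible probability, and a run whose first emptying event comes
  later does not draw it at step 1, so it still has a single item afterwards.  By induction on
  the step, no type is more likely than such a type to be the first one emptied at a given step.\<close>

definition stocked :: "nat \<Rightarrow> (nat \<Rightarrow> nat) \<Rightarrow> nat set" where
  "stocked K v = {j \<in> {1..K}. 0 < v j}"

lemma first_empty_Suc:
  "first_empty K v (Suc t) i =
     (if card (stocked K v) < 2 then 0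
      else (\<Sum>j\<in>stocked K v. if v j = 1 then (if t = 0 \<and> j = i then 1 else 0)
                              else first_empty K (v(j := v j - 1)) t i)
           / real (card (stocked K v)))"
  unfolding stocked_def by (simp only: first_empty.simps Let_def)

lemma first_empty_Suc_0:
  "first_empty K v (Suc 0) i =
     (if card (stocked K v) < 2 then 0
      else of_bool (i \<in> stocked K v \<and> v i = 1) / real (card (stocked K v)))"
proof -
  have "(\<Sum>j\<in>stocked K v. if v j = 1 then (if 0 = (0::nat) \<and> j = i then 1 else 0)
                          else first_empty K (v(j := v j - 1)) 0 i)
      = (\<Sum>j\<in>stocked K v. if j = i then of_bool (v i = 1) else (0::real))"
    by (intro sum.cong) auto
  also have "\<dots> = of_bool (i \<in> stocked K v \<and> v i = 1)"
    by (simp add: stocked_def)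
  finally show ?thesis
    unfolding first_empty_Suc by simp
qed

lemma first_empty_Suc_pos:
  assumes "t \<noteq> 0"
  shows "first_empty K v (Suc t) i =
     (if card (stocked K v) < 2 then 0
      else (\<Sum>j\<in>stocked K v. if v j = 1 then 0 else first_empty K (v(j := v j - 1)) t i)
           / real (card (stocked K v)))"
  unfolding first_empty_Suc by (simp only: assms simp_thms if_False)

lemma first_empty_le_unit_stock:
  assumes "k \<in> {1..K}" and "v k = 1"
  shows "first_empty K v t i \<le> first_empty K v t k"
  using assms(2)
proof (induction t arbitrary: v)
  case 0
  show ?case by simp
next
  case (Suc t)
  show ?case
  proof (cases "t = 0")
    case True
    have "k \<in> stocked K v"
      using assms(1) Suc.prems by (simp add: stocked_def)
    with Suc.prems show ?thesis
      unfolding True first_empty_Suc_0 by (simp add: divide_right_mono)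
  next
    case False
    have "(\<Sum>j\<in>stocked K v. if v j = 1 then 0 else first_empty K (v(j := v j - 1)) t i)
        \<le> (\<Sum>j\<in>stocked K v. if v j = 1 then 0 else first_empty K (v(j := v j - 1)) t k)"
    proof (rule sum_mono)
      fix j
      show "(if v j = 1 then 0 else first_empty K (v(j := v j - 1)) t i)
          \<le> (if v j = 1 then 0 else first_empty K (v(j := v j - 1)) t k)"
      proof (cases "v j = 1")
        case False
        with Suc.prems have "(v(j := v j - 1)) k = 1"
          by auto
        then have "first_empty K (v(j := v j - 1)) t i \<le> first_empty K (v(j := v j - 1)) t k"
          by (rule Suc.IH)
        with False show ?thesis
          by simp
      qed simp
    qed
    then show ?thesis
      unfolding first_empty_Suc_pos[OF False]
      by (simp add: divide_right_mono)
  qed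
qed

theorem lemma11:
  fixes K :: nat and n :: "nat \<Rightarrow> nat" and t :: nat
  assumes "K > 2"
    and "n 1 = 1"
    and "n 2 > 1"
    and "\<forall>i\<in>{3..K}. n i > 0"
    and "tau_prob K n t > 0"
  shows "first_empty K n t 1 / tau_prob K n t \<ge> first_empty K n t 2 / tau_prob K n t"
proof -
  have "first_empty K n t 2 \<le> first_empty K n t 1"
    using assms(1,2) by (intro first_empty_le_unit_stock) auto
  then show ?thesis
    using assms(5) by (simp add: divide_right_mono)
qed

end
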